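(* If a graph $G$ has at most $a$ vertices of degree greater than $D$, then $G$ has clique-based $\infty$-admissibility at most $a+D$.
   Context: All graphs are finite and simple. Given an ordering $v_1,\ldots,v_n$ of $V(G)$, the $\infty$-backconnectivity of $v_k$ is the maximum number of paths (of any length) from $v_k$ to $\{v_1,\ldots,v_{k-1}\}$ that pairwise intersect only in $v_k$; the $\infty$-admissibility of the ordering is the maximum $\infty$-backconnectivity over its vertices. For $X\subseteq V(G)$, $G$ has $X$-based $\infty$-admissibility at most $t$ if there is an ordering $v_1,\ldots,v_n$ of $V(G)$ with $\infty$-admissibility at most $t$ and $X=\{v_1,\ldots,v_{|X|}\}$. $G$ has clique-based $\infty$-admissibility at most $t$ if it has $X$-based $\infty$-admissibility at most $t$ for every $X\subseteq V(G)$ inducing a clique in $G$. *)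

theory Defs
  imports Main
begin

definition simple_graph :: "'a set \<Rightarrow> ('a \<Rightarrow> 'a \<Rightarrow> bool) \<Rightarrow> bool" where
  "simple_graph V E \<longleftrightarrow> finite V \<and> (\<forall>u v. E u v \<longrightarrow> E v u)
     \<and> (\<forall>v. \<not> E v v) \<and> (\<forall>u v. E u v \<longrightarrow> u \<in> V \<and> v \<in> V)"

definition degree :: "'a set \<Rightarrow> ('a \<Rightarrow> 'a \<Rightarrow> bool) \<Rightarrow> 'a \<Rightarrow> nat" where
  "degree V E v = card {u \<in> V. E v u}"

definition is_path :: "'a set \<Rightarrow> ('a \<Rightarrow> 'a \<Rightarrow> bool) \<Rightarrow> 'a list \<Rightarrow> bool" where
  "is_path V E p \<longleftrightarrow> p \<noteq> [] \<and> distinct p \<and> set p \<subseteq> V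
     \<and> (\<forall>i. Suc i < length p \<longrightarrow> E (p ! i) (p ! Suc i))"

definition path_to :: "'a set \<Rightarrow> ('a \<Rightarrow> 'a \<Rightarrow> bool) \<Rightarrow> 'a \<Rightarrow> 'a set \<Rightarrow> 'a list \<Rightarrow> bool" where
  "path_to V E v S p \<longleftrightarrow> is_path V E p \<and> hd p = v \<and> last p \<in> S"

definition fan :: "'a set \<Rightarrow> ('a \<Rightarrow> 'a \<Rightarrow> bool) \<Rightarrow> 'a \<Rightarrow> 'a set \<Rightarrow> 'a list set \<Rightarrow> bool" where
  "fan V E v S P \<longleftrightarrow> (\<forall>p\<in>P. path_to V E v S p)
     \<and> (\<forall>p\<in>P. \<forall>q\<in>P. p \<noteq> q \<longrightarrow> set p \<inter> set q = {v})"

text \<open>The infinity-backconnectivity of the k-th vertex (0-indexed) of the ordering vs.\<close>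
definition backconn :: "'a set \<Rightarrow> ('a \<Rightarrow> 'a \<Rightarrow> bool) \<Rightarrow> 'a list \<Rightarrow> nat \<Rightarrow> nat" where
  "backconn V E vs k = Max {card P | P. fan V E (vs ! k) (set (take k vs)) P}"

definition is_ordering :: "'a set \<Rightarrow> 'a list \<Rightarrow> bool" where
  "is_ordering V vs \<longleftrightarrow> distinct vs \<and> set vs = V"

definition adm_le :: "'a set \<Rightarrow> ('a \<Rightarrow> 'a \<Rightarrow> bool) \<Rightarrow> 'a list \<Rightarrow> nat \<Rightarrow> bool" where
  "adm_le V E vs t \<longleftrightarrow> (\<forall>k < length vs. backconn V E vs k \<le> t)"

definition X_based_adm_le :: "'a set \<Rightarrow> ('a \<Rightarrow> 'a \<Rightarrow> bool) \<Rightarrow> 'a set \<Rightarrow> nat \<Rightarrow> bool" where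
  "X_based_adm_le V E X t \<longleftrightarrow>
     (\<exists>vs. is_ordering V vs \<and> adm_le V E vs t \<and> X = set (take (card X) vs))"

definition is_clique :: "'a set \<Rightarrow> ('a \<Rightarrow> 'a \<Rightarrow> bool) \<Rightarrow> 'a set \<Rightarrow> bool" where
  "is_clique V E X \<longleftrightarrow> X \<subseteq> V \<and> (\<forall>u\<in>X. \<forall>v\<in>X. u \<noteq> v \<longrightarrow> E u v)"

definition clique_based_adm_le :: "'a set \<Rightarrow> ('a \<Rightarrow> 'a \<Rightarrow> bool) \<Rightarrow> nat \<Rightarrow> bool" where
  "clique_based_adm_le V E t \<longleftrightarrow> (\<forall>X. is_clique V E X \<longrightarrow> X_based_adm_le V E X t)"

end

theory Submission
  imports Defs
begin

text \<open>Two bounds hold for every vertex of every ordering: the paths of a fan leave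
  their common start through distinct neighbours and end in distinct target vertices,
  so the backconnectivity of the k-th vertex is at most both its degree and k.
  Given a clique X, put X first, then the vertices of degree greater than D, then the
  rest. At most D + 1 vertices of X have degree at most D (any one of them is adjacent
  to all others), so every vertex of degree greater than D sits among the first a + D + 1
  positions, and every other vertex is bounded by its degree.\<close>

lemma fan_card_le_card_target:
  assumes "fan V E v S P" "v \<notin> S" "finite S"
  shows "card P \<le> card S"
proof -
  have "inj_on last P"
  proof (rule inj_onI)
    fix p q assume pq: "p \<in> P" "q \<in> P" "last p = last q"
    show "p = q"
    proof (rule ccontr)
      assume "p \<noteq> q"
      hence "set p \<inter> set q = {v}" using assms(1) pq unfolding fan_def by blast
      moreover have "p \<noteq> []" "q \<noteq> []"
        using assms(1) pq unfolding fan_def path_to_def is_path_def by auto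
      ultimately have "last p = v" using pq(3) by (metis IntI last_in_set singletonD)
      moreover have "last p \<in> S" using assms(1) pq unfolding fan_def path_to_def by auto
      ultimately show False using assms(2) by simp
    qed
  qed
  moreover have "last ` P \<subseteq> S" using assms(1) unfolding fan_def path_to_def by auto
  ultimately show ?thesis using card_inj_on_le assms(3) by blast
qed

lemma path_to_second_vertex:
  assumes "path_to V E v S p" "v \<notin> S"
  shows "Suc 0 < length p" "p ! 0 = v" "p ! 1 \<in> {u \<in> V. E v u}"
proof -
  have path: "is_path V E p" and hd: "hd p = v" and last: "last p \<in> S"
    using assms(1) unfolding path_to_def by auto
  have "p \<noteq> []" using path unfolding is_path_def by simp
  show long: "Suc 0 < length p"
  proof (rule ccontr)
    assume "\<not> Suc 0 < length p"
    with \<open>p \<noteq> []\<close> have "last p = hd p" by (cases p) auto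
    with hd last assms(2) show False by simp
  qed
  show first: "p ! 0 = v" using hd \<open>p \<noteq> []\<close> by (simp add: hd_conv_nth)
  have "E (p ! 0) (p ! Suc 0)" using path long unfolding is_path_def by blast
  moreover have "p ! 1 \<in> V" using path long unfolding is_path_def by auto
  ultimately show "p ! 1 \<in> {u \<in> V. E v u}" using first by simp
qed

lemma fan_card_le_degree:
  assumes "fan V E v S P" "v \<notin> S" "finite V"
  shows "card P \<le> degree V E v"
proof -
  have paths: "path_to V E v S p" if "p \<in> P" for p
    using assms(1) that unfolding fan_def by blast
  have "inj_on (\<lambda>p. p ! 1) P"
  proof (rule inj_onI)
    fix p q assume pq: "p \<in> P" "q \<in> P" "p ! 1 = q ! 1"
    show "p = q"
    proof (rule ccontr)
      assume "p \<noteq> q"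
      hence "set p \<inter> set q = {v}" using assms(1) pq unfolding fan_def by blast
      moreover have "p ! 1 \<in> set p" "q ! 1 \<in> set q"
        using path_to_second_vertex(1)[OF paths assms(2)] pq by (metis One_nat_def nth_mem)+
      ultimately have "p ! 1 = p ! 0"
        using pq(3) path_to_second_vertex(2)[OF paths[OF pq(1)] assms(2)] by auto
      moreover have "distinct p" using paths[OF pq(1)] unfolding path_to_def is_path_def by simp
      ultimately show False
        using path_to_second_vertex(1)[OF paths[OF pq(1)] assms(2)] nth_eq_iff_index_eq by fastforce
    qed
  qed
  moreover have "(\<lambda>p. p ! 1) ` P \<subseteq> {u \<in> V. E v u}"
    using path_to_second_vertex(3)[OF paths assms(2)] by blast
  moreover have "finite {u \<in> V. E v u}" using assms(3) by simp
  ultimately show ?thesis unfolding degree_def by (rule card_inj_on_le)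
qed

lemma backconn_leI:
  assumes "\<And>P. fan V E (vs ! k) (set (take k vs)) P \<Longrightarrow> card P \<le> t"
  shows "backconn V E vs k \<le> t"
proof -
  let ?A = "{card P | P. fan V E (vs ! k) (set (take k vs)) P}"
  have "fan V E (vs ! k) (set (take k vs)) {}" unfolding fan_def by simp
  hence "?A \<noteq> {}" by blast
  moreover have bounded: "\<forall>x\<in>?A. x \<le> t" using assms by blast
  hence "finite ?A" using finite_nat_set_iff_bounded_le by blast
  ultimately show ?thesis unfolding backconn_def using bounded by simp
qed

lemma nth_mem_set_drop:
  assumes "i \<le> k" "k < length xs"
  shows "xs ! k \<in> set (drop i xs)"
  using nth_mem[of "k - i" "drop i xs"] assms by simp

lemma nth_notin_set_take:
  assumes "distinct xs" "i \<le> k" "k < length xs"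
  shows "xs ! k \<notin> set (take i xs)"
  using set_take_disj_set_drop_if_distinct[OF assms(1) order_refl, of i]
    nth_mem_set_drop[OF assms(2,3)] by blast

lemma backconn_le_index:
  assumes "distinct vs" "k < length vs"
  shows "backconn V E vs k \<le> k"
proof (rule backconn_leI)
  fix P assume "fan V E (vs ! k) (set (take k vs)) P"
  hence "card P \<le> card (set (take k vs))"
    using nth_notin_set_take[OF assms(1) order_refl assms(2)]
    by (rule fan_card_le_card_target[OF _ _ finite_set])
  also have "\<dots> \<le> k" using card_length[of "take k vs"] by simp
  finally show "card P \<le> k" .
qed

lemma backconn_le_degree:
  assumes "finite V" "distinct vs" "k < length vs"
  shows "backconn V E vs k \<le> degree V E (vs ! k)"
  by (rule backconn_leI,
      rule fan_card_le_degree[OF _ nth_notin_set_take[OF assms(2) order_refl assms(3)] assms(1)])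

lemma adm_le_low_degree_after_prefix:
  assumes "finite V" "is_ordering V vs" "set (take (card Y) vs) = Y" "card Y \<le> Suc t"
    and "\<And>v. v \<in> V - Y \<Longrightarrow> degree V E v \<le> t"
  shows "adm_le V E vs t"
  unfolding adm_le_def
proof (intro allI impI)
  fix k assume k: "k < length vs"
  have distinct: "distinct vs" using assms(2) unfolding is_ordering_def by simp
  show "backconn V E vs k \<le> t"
  proof (cases "k < card Y")
    case True
    thus ?thesis using backconn_le_index[OF distinct k, where V = V and E = E] assms(4) by simp
  next
    case False
    have "vs ! k \<notin> Y"
      using nth_notin_set_take[OF distinct _ k, of "card Y"] False assms(3) by simp
    moreover have "vs ! k \<in> V" using assms(2) k unfolding is_ordering_def by auto
    ultimately show ?thesis
      using backconn_le_degree[OF assms(1) distinct k, where E = E] assms(5) by fastforce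
  qed
qed

lemma ordering_with_prefixes:
  assumes "finite V" "X \<subseteq> Y" "Y \<subseteq> V"
  obtains vs where "is_ordering V vs" "set (take (card X) vs) = X" "set (take (card Y) vs) = Y"
proof -
  have "finite Y" using assms(1,3) finite_subset by blast
  hence finite: "finite X" "finite (Y - X)" "finite (V - Y)"
    using assms(1) finite_subset[OF assms(2)] by simp_all
  obtain xs ys zs where xs: "set xs = X" "distinct xs" and ys: "set ys = Y - X" "distinct ys"
    and zs: "set zs = V - Y" "distinct zs"
    using finite[THEN finite_distinct_list] by metis
  have "set (xs @ ys) = Y" "distinct (xs @ ys)" using xs ys assms(2) by auto
  hence "card X = length xs" "card Y = length (xs @ ys)" using xs by (metis distinct_card)+
  with xs ys zs show ?thesis
    using that[of "(xs @ ys) @ zs"] assms unfolding is_ordering_def by auto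
qed

lemma clique_card_le_Suc_degree:
  assumes "finite V" "is_clique V E X" "w \<in> X"
  shows "card X \<le> Suc (degree V E w)"
proof -
  have "X - {w} \<subseteq> {u \<in> V. E w u}" using assms(2,3) unfolding is_clique_def by auto
  hence "card (X - {w}) \<le> degree V E w" unfolding degree_def using assms(1) by (simp add: card_mono)
  moreover have "finite X" using assms(1,2) finite_subset unfolding is_clique_def by blast
  ultimately show ?thesis using assms(3) by simp
qed

lemma clique_card_low_degree_part:
  assumes "finite V" "is_clique V E X"
  shows "card (X - {v \<in> V. degree V E v > D}) \<le> Suc D"
proof (cases "X - {v \<in> V. degree V E v > D} = {}")
  case False
  then obtain w where w: "w \<in> X" "\<not> degree V E w > D"
    using assms(2) unfolding is_clique_def by blast
  have "card (X - {v \<in> V. degree V E v > D}) \<le> card X"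
    using assms finite_subset unfolding is_clique_def by (metis Diff_subset card_mono)
  thus ?thesis using clique_card_le_Suc_degree[OF assms w(1)] w(2) by simp
qed (metis card.empty zero_le)

theorem lemma24:
  fixes V :: "'a set" and E :: "'a \<Rightarrow> 'a \<Rightarrow> bool" and a D :: nat
  assumes "simple_graph V E"
    and "card {v \<in> V. degree V E v > D} \<le> a"
  shows "clique_based_adm_le V E (a + D)"
  unfolding clique_based_adm_le_def X_based_adm_le_def
proof (intro allI impI)
  fix X assume clique: "is_clique V E X"
  define H where "H = {v \<in> V. degree V E v > D}"
  have finite: "finite V" using assms(1) unfolding simple_graph_def by simp
  have "X \<subseteq> V" using clique unfolding is_clique_def by simp
  hence "finite X" "finite H" using finite finite_subset unfolding H_def by auto
  obtain vs where vs: "is_ordering V vs" "set (take (card X) vs) = X"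
      "set (take (card (X \<union> H)) vs) = X \<union> H"
    using ordering_with_prefixes[OF finite, of X "X \<union> H"] \<open>X \<subseteq> V\<close> unfolding H_def by auto
  have "card (X \<union> H) = card (X - H) + card H"
    using card_Un_disjoint[of "X - H" H] \<open>finite X\<close> \<open>finite H\<close> by (simp add: Int_commute)
  also have "\<dots> \<le> Suc (a + D)"
    using clique_card_low_degree_part[OF finite clique, of D] assms(2) unfolding H_def by simp
  finally have "adm_le V E vs (a + D)"
    by (rule adm_le_low_degree_after_prefix[OF finite vs(1,3)]) (auto simp: H_def)
  with vs show "\<exists>vs. is_ordering V vs \<and> adm_le V E vs (a + D) \<and> X = set (take (card X) vs)"
    by auto
qed

end
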